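(* Let $X$ be a real Banach space, $F$ a non-empty closed bounded subset of $X$, and $x\in X$ with $Q_F(x)\neq\emptyset$. The following are equivalent. (1) $F$ is sup-compact at $x$. (2) $Q_F(x)$ is compact and $Q_F(x,\frac1n)\xrightarrow{V}Q_F(x)$. (3) $Q_F(x)$ is compact and $Q_F(x,\frac1n)\xrightarrow{H}Q_F(x)$. (4) $Q_F(x)$ is compact and $F$ is strongly remotal at $x$. (5) $\alpha(Q_F(x,\frac1n))\to0$.
   Context: $B_X$ is the closed unit ball. $r(F,x)=\sup_{y\in F}\|x-y\|$, $Q_F(x,\delta)=\{y\in F:\|x-y\|\ge r(F,x)-\delta\}$ for $\delta\ge0$, $Q_F(x)=Q_F(x,0)$. $F$ is sup-compact at $x$ if every sequence $(y_n)$ in $F$ with $\|x-y_n\|\to r(F,x)$ has a subsequence converging to an element of $F$. $F$ is strongly remotal at $x$ if for every $\epsilon>0$ there is $\delta>0$ with $Q_F(x,\delta)\subseteq Q_F(x)+\epsilon B_X$. For closed bounded sets $C_n,C_0$: $C_n\xrightarrow{V}C_0$ means both (a) for every open $U\supseteq C_0$, eventually $C_n\subseteq U$, and (b) for every open $U$ with $C_0\cap U\ne\emptyset$, eventually $C_n\cap U\neq\emptyset$; $C_n\xrightarrow{H}C_0$ means for every $\epsilon>0$, eventually $C_n\subseteq C_0+\epsilon B_X$ and $C_0\subseteq C_n+\epsilon B_X$. $\alpha(A)=\inf\{\epsilon>0:A\subseteq E+\epsilon B_X$ for some finite $E\subseteq X\}$. *)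

theory Defs
  imports "HOL-Analysis.Analysis"
begin

definition ball_sum :: "'a::real_normed_vector set \<Rightarrow> real \<Rightarrow> 'a set" where
  "ball_sum A e = {a + e *\<^sub>R b | a b. a \<in> A \<and> norm b \<le> 1}"

definition farthest_rad :: "'a::real_normed_vector set \<Rightarrow> 'a \<Rightarrow> real" where
  "farthest_rad F x = (SUP y\<in>F. norm (x - y))"

definition Qd :: "'a::real_normed_vector set \<Rightarrow> 'a \<Rightarrow> real \<Rightarrow> 'a set" where
  "Qd F x d = {y \<in> F. norm (x - y) \<ge> farthest_rad F x - d}"

definition Q :: "'a::real_normed_vector set \<Rightarrow> 'a \<Rightarrow> 'a set" where
  "Q F x = Qd F x 0"

definition sup_compact :: "'a::real_normed_vector set \<Rightarrow> 'a \<Rightarrow> bool" where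
  "sup_compact F x \<longleftrightarrow>
     (\<forall>y::nat \<Rightarrow> 'a. (\<forall>n. y n \<in> F) \<and> (\<lambda>n. norm (x - y n)) \<longlonglongrightarrow> farthest_rad F x \<longrightarrow>
        (\<exists>r l. strict_mono r \<and> l \<in> F \<and> (y \<circ> r) \<longlonglongrightarrow> l))"

definition strongly_remotal :: "'a::real_normed_vector set \<Rightarrow> 'a \<Rightarrow> bool" where
  "strongly_remotal F x \<longleftrightarrow>
     (\<forall>e>0. \<exists>d>0. Qd F x d \<subseteq> ball_sum (Q F x) e)"

definition vietoris_conv :: "(nat \<Rightarrow> 'a::real_normed_vector set) \<Rightarrow> 'a set \<Rightarrow> bool" where
  "vietoris_conv C C0 \<longleftrightarrow>
     (\<forall>U. open U \<and> C0 \<subseteq> U \<longrightarrow> (\<forall>\<^sub>F n in sequentially. C n \<subseteq> U)) \<and>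
     (\<forall>U. open U \<and> C0 \<inter> U \<noteq> {} \<longrightarrow> (\<forall>\<^sub>F n in sequentially. C n \<inter> U \<noteq> {}))"

definition hausdorff_conv :: "(nat \<Rightarrow> 'a::real_normed_vector set) \<Rightarrow> 'a set \<Rightarrow> bool" where
  "hausdorff_conv C C0 \<longleftrightarrow>
     (\<forall>e>0. \<forall>\<^sub>F n in sequentially. C n \<subseteq> ball_sum C0 e \<and> C0 \<subseteq> ball_sum (C n) e)"

definition kur_alpha :: "'a::real_normed_vector set \<Rightarrow> real" where
  "kur_alpha A = Inf {e. e > 0 \<and> (\<exists>E. finite E \<and> A \<subseteq> ball_sum E e)}"

end

theory Submission
  imports Defs
begin

text \<open>
  A sequence in \<open>F\<close> is maximizing for the distance from \<open>x\<close> exactly when it eventually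
  enters every \<open>Qd F x \<delta>\<close>, \<open>\<delta> > 0\<close>.
  Strong remotality is the upper half of Hausdorff convergence of \<open>Qd F x (1/n)\<close> to \<open>Q F x\<close>,
  the lower half being automatic since \<open>Q F x \<subseteq> Qd F x \<delta>\<close>; for a compact limit, upper
  Hausdorff and upper Vietoris convergence coincide.
  If \<open>F\<close> is sup-compact, a maximizing sequence staying \<open>\<epsilon>\<close> away from \<open>Q F x\<close> would have a
  subsequence converging into \<open>Q F x\<close>, so \<open>F\<close> is strongly remotal; then finitely many
  \<open>\<epsilon>\<close>-balls covering the compact set \<open>Q F x\<close> eventually bound \<open>\<alpha>(Qd F x (1/n))\<close> by \<open>2\<epsilon>\<close>.
  Conversely, \<open>\<alpha>(Qd F x (1/n)) \<rightarrow> 0\<close> makes every maximizing sequence totally bounded, so it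
  has a convergent subsequence because \<open>X\<close> is complete.
\<close>

lemma ball_sum_eq_UN_cball:
  fixes A :: "'a::real_normed_vector set"
  assumes "e > 0"
  shows "ball_sum A e = (\<Union>a\<in>A. cball a e)"
proof
  show "ball_sum A e \<subseteq> (\<Union>a\<in>A. cball a e)"
    using assms by (auto simp: ball_sum_def dist_norm)
next
  show "(\<Union>a\<in>A. cball a e) \<subseteq> ball_sum A e"
  proof
    fix y assume "y \<in> (\<Union>a\<in>A. cball a e)"
    then obtain a where a: "a \<in> A" "norm (a - y) \<le> e" by (auto simp: dist_norm)
    have "y = a + e *\<^sub>R ((1 / e) *\<^sub>R (y - a))" using assms by simp
    moreover have "norm ((1 / e) *\<^sub>R (y - a)) \<le> 1"
      using assms a by (simp add: norm_minus_commute divide_le_eq)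
    ultimately show "y \<in> ball_sum A e" unfolding ball_sum_def using a by blast
  qed
qed

lemma subset_ball_sum: "0 \<le> e \<Longrightarrow> A \<subseteq> ball_sum A e"
  unfolding ball_sum_def by force

lemma ball_sum_mono: "A \<subseteq> B \<Longrightarrow> ball_sum A e \<subseteq> ball_sum B e"
  unfolding ball_sum_def by blast

lemma ball_sum_mono_radius:
  assumes "0 < d" "d \<le> e"
  shows "ball_sum A d \<subseteq> ball_sum A e"
  using assms by (auto simp: ball_sum_eq_UN_cball)

lemma ball_sum_ball_sum_subset:
  assumes "0 < d" "0 < e"
  shows "ball_sum (ball_sum A d) e \<subseteq> ball_sum A (d + e)"
proof
  fix z assume "z \<in> ball_sum (ball_sum A d) e"
  then obtain a y where "a \<in> A" "dist a y \<le> d" "dist y z \<le> e"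
    using assms by (auto simp: ball_sum_eq_UN_cball)
  then have "dist a z \<le> d + e" using dist_triangle[of a z y] by linarith
  then show "z \<in> ball_sum A (d + e)"
    using assms \<open>a \<in> A\<close> by (auto simp: ball_sum_eq_UN_cball)
qed

lemma compact_imp_finite_ball_sum_cover:
  assumes "compact K" "e > 0"
  obtains E where "finite E" "K \<subseteq> ball_sum E e"
proof -
  obtain E where "finite E" "K \<subseteq> (\<Union>p\<in>E. ball p e)"
    using assms unfolding compact_eq_totally_bounded by blast
  then show ?thesis
    using that assms(2) by (force simp: ball_sum_eq_UN_cball)
qed

lemma kur_alpha_le:
  assumes "e > 0" "finite E" "A \<subseteq> ball_sum E e"
  shows "kur_alpha A \<le> e"
  unfolding kur_alpha_def by (rule cInf_lower) (use assms in \<open>auto intro: bdd_belowI[of _ 0]\<close>)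

lemma bounded_imp_finite_ball_sum_cover:
  fixes A :: "'a::real_normed_vector set"
  assumes "bounded A"
  obtains e E where "e > 0" "finite E" "A \<subseteq> ball_sum E e"
proof -
  obtain B where "B > 0" "\<forall>y\<in>A. norm y \<le> B" using assms bounded_pos by blast
  then have "A \<subseteq> ball_sum {0} B" by (auto simp: ball_sum_eq_UN_cball)
  then show ?thesis using that \<open>B > 0\<close> by blast
qed

lemma kur_alpha_nonneg:
  assumes "bounded A" \<comment> \<open>otherwise \<open>kur_alpha A = Inf {}\<close>, which is unspecified\<close>
  shows "0 \<le> kur_alpha A"
proof -
  obtain e E where "e > 0" "finite E" "A \<subseteq> ball_sum E e"
    using bounded_imp_finite_ball_sum_cover[OF assms] .
  then show ?thesis
    unfolding kur_alpha_def by (intro cInf_greatest) auto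
qed

lemma finite_ball_sum_cover_if_kur_alpha_less:
  assumes "bounded A" "kur_alpha A < e"
  obtains E where "finite E" "A \<subseteq> ball_sum E e"
proof -
  obtain e0 E0 where "e0 > 0" "finite E0" "A \<subseteq> ball_sum E0 e0"
    using bounded_imp_finite_ball_sum_cover[OF assms(1)] .
  then have "{e. e > 0 \<and> (\<exists>E. finite E \<and> A \<subseteq> ball_sum E e)} \<noteq> {}" by blast
  from cInf_lessD[OF this assms(2)[unfolded kur_alpha_def]]
  obtain e' E where "0 < e'" "e' < e" "finite E" "A \<subseteq> ball_sum E e'" by blast
  then show ?thesis using that ball_sum_mono_radius[of e' e E] by auto
qed

lemma convergent_subseq_if_eventually_finitely_covered:
  fixes y :: "nat \<Rightarrow> 'a::banach"
  assumes cover: "\<And>e. e > 0 \<Longrightarrow> \<exists>E. finite E \<and> (\<forall>\<^sub>F m in sequentially. y m \<in> ball_sum E e)"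
  obtains r l where "strict_mono r" "(y \<circ> r) \<longlonglongrightarrow> l"
proof -
  have "\<exists>k. finite k \<and> closure (range y) \<subseteq> (\<Union>p\<in>k. ball p e)" if "e > 0" for e :: real
  proof -
    obtain E N where E: "finite E" and N: "\<And>m. m \<ge> N \<Longrightarrow> y m \<in> ball_sum E (e / 2)"
      using cover[of "e / 2"] \<open>e > 0\<close> unfolding eventually_sequentially by auto
    define k where "k = E \<union> y ` {..<N}"
    have "range y \<subseteq> (\<Union>p\<in>k. cball p (e / 2))"
    proof
      fix z assume "z \<in> range y"
      then obtain m where z: "z = y m" by blast
      show "z \<in> (\<Union>p\<in>k. cball p (e / 2))"
      proof (cases "m < N")
        case True
        then show ?thesis using \<open>e > 0\<close> unfolding k_def z by force
      next
        case False
        then show ?thesis using N[of m] \<open>e > 0\<close> by (auto simp: k_def z ball_sum_eq_UN_cball)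
      qed
    qed
    moreover have "finite k" using E by (simp add: k_def)
    ultimately have "closure (range y) \<subseteq> (\<Union>p\<in>k. cball p (e / 2))"
      by (intro closure_minimal closed_UN) auto
    also have "\<dots> \<subseteq> (\<Union>p\<in>k. ball p e)" using \<open>e > 0\<close> by auto
    finally show ?thesis using \<open>finite k\<close> by blast
  qed
  then have "compact (closure (range y))"
    unfolding compact_eq_totally_bounded by (simp add: complete_eq_closed)
  then show ?thesis
    using that closure_subset[of "range y"]
    by (metis compact_imp_seq_compact range_subsetD seq_compactE)
qed

lemma norm_diff_le_farthest_rad:
  assumes "bounded F" "y \<in> F"
  shows "norm (x - y) \<le> farthest_rad F x"
proof -
  obtain B where "\<forall>y\<in>F. norm y \<le> B" using assms(1) bounded_iff by blast
  then have "\<forall>y\<in>F. norm (x - y) \<le> norm x + B"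
    by (meson add_left_mono norm_triangle_ineq4 order_trans)
  then show ?thesis
    unfolding farthest_rad_def using assms(2) by (intro cSUP_upper) (auto intro: bdd_aboveI2)
qed

lemma Qd_subset: "Qd F x d \<subseteq> F"
  by (auto simp: Qd_def)

lemma Qd_mono: "d \<le> d' \<Longrightarrow> Qd F x d \<subseteq> Qd F x d'"
  by (auto simp: Qd_def)

lemma Q_subset_Qd: "0 \<le> d \<Longrightarrow> Q F x \<subseteq> Qd F x d"
  unfolding Q_def by (rule Qd_mono)

lemma mem_Q_iff: "bounded F \<Longrightarrow> y \<in> Q F x \<longleftrightarrow> y \<in> F \<and> norm (x - y) = farthest_rad F x"
  unfolding Q_def Qd_def using norm_diff_le_farthest_rad[of F y x] by force

lemma eventually_Qd_inverse_subset:
  assumes "d > 0"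
  shows "\<forall>\<^sub>F n in sequentially. Qd F x (1 / real n) \<subseteq> Qd F x d"
  using order_tendstoD(2)[OF lim_1_over_n assms] by (rule eventually_mono) (simp add: Qd_mono)

lemma eventually_in_Qd_if_maximizing:
  assumes "\<And>m. y m \<in> F" "(\<lambda>m. norm (x - y m)) \<longlonglongrightarrow> farthest_rad F x" "d > 0"
  shows "\<forall>\<^sub>F m in sequentially. y m \<in> Qd F x d"
  using order_tendstoD(1)[OF assms(2), of "farthest_rad F x - d"] assms(3)
  by (auto elim!: eventually_mono simp: Qd_def assms(1))

lemma maximizing_if_in_Qd:
  assumes "bounded F" "d \<longlonglongrightarrow> 0" "\<And>n. y n \<in> Qd F x (d n)"
  shows "(\<lambda>n. norm (x - y n)) \<longlonglongrightarrow> farthest_rad F x"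
proof (rule tendsto_sandwich[of "\<lambda>n. farthest_rad F x - d n" _ _ "\<lambda>n. farthest_rad F x"])
  show "\<forall>\<^sub>F n in sequentially. farthest_rad F x - d n \<le> norm (x - y n)"
    using assms(3) by (simp add: Qd_def)
  show "\<forall>\<^sub>F n in sequentially. norm (x - y n) \<le> farthest_rad F x"
    using assms(1,3) Qd_subset by (blast intro: always_eventually norm_diff_le_farthest_rad)
  show "(\<lambda>n. farthest_rad F x - d n) \<longlonglongrightarrow> farthest_rad F x"
    using tendsto_diff[OF tendsto_const assms(2)] by simp
qed simp

lemma limit_of_maximizing_in_Q:
  assumes "bounded F" "(\<lambda>n. norm (x - y n)) \<longlonglongrightarrow> farthest_rad F x" "y \<longlonglongrightarrow> l" "l \<in> F"
  shows "l \<in> Q F x"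
proof -
  have "(\<lambda>n. norm (x - y n)) \<longlonglongrightarrow> norm (x - l)" by (intro tendsto_intros assms(3))
  then have "norm (x - l) = farthest_rad F x" using assms(2) LIMSEQ_unique by blast
  then show ?thesis using assms(1,4) by (simp add: mem_Q_iff)
qed

lemma strongly_remotal_iff_eventually:
  "strongly_remotal F x \<longleftrightarrow>
     (\<forall>e>0. \<forall>\<^sub>F n in sequentially. Qd F x (1 / real n) \<subseteq> ball_sum (Q F x) e)"
proof (intro iffI allI impI)
  fix e :: real assume "strongly_remotal F x" "e > 0"
  then obtain d where "d > 0" "Qd F x d \<subseteq> ball_sum (Q F x) e"
    unfolding strongly_remotal_def by blast
  then show "\<forall>\<^sub>F n in sequentially. Qd F x (1 / real n) \<subseteq> ball_sum (Q F x) e"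
    using eventually_Qd_inverse_subset[of d F x] by (auto elim!: eventually_mono)
next
  assume ev: "\<forall>e>0. \<forall>\<^sub>F n in sequentially. Qd F x (1 / real n) \<subseteq> ball_sum (Q F x) e"
  show "strongly_remotal F x" unfolding strongly_remotal_def
  proof (intro allI impI)
    fix e :: real assume "e > 0"
    then obtain N where N: "\<And>n. n \<ge> N \<Longrightarrow> Qd F x (1 / real n) \<subseteq> ball_sum (Q F x) e"
      using ev unfolding eventually_sequentially by blast
    have "Qd F x (1 / real (Suc N)) \<subseteq> ball_sum (Q F x) e" using N[of "Suc N"] by simp
    moreover have "(0::real) < 1 / real (Suc N)" by simp
    ultimately show "\<exists>d>0. Qd F x d \<subseteq> ball_sum (Q F x) e" by blast
  qed
qed

lemma hausdorff_conv_Qd_iff_strongly_remotal: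
  "hausdorff_conv (\<lambda>n. Qd F x (1 / real n)) (Q F x) \<longleftrightarrow> strongly_remotal F x"
proof -
  have "Q F x \<subseteq> ball_sum (Qd F x (1 / real n)) e" if "e > 0" for n e
  proof -
    have "Q F x \<subseteq> Qd F x (1 / real n)" by (simp add: Q_subset_Qd)
    also have "\<dots> \<subseteq> ball_sum (Qd F x (1 / real n)) e" using that by (simp add: subset_ball_sum)
    finally show ?thesis .
  qed
  then show ?thesis
    unfolding hausdorff_conv_def strongly_remotal_iff_eventually by simp
qed

lemma vietoris_conv_Qd_imp_strongly_remotal:
  assumes "vietoris_conv (\<lambda>n. Qd F x (1 / real n)) (Q F x)"
  shows "strongly_remotal F x"
  unfolding strongly_remotal_iff_eventually
proof (intro allI impI)
  fix e :: real assume "e > 0"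
  have "open (\<Union>q\<in>Q F x. ball q e)" "Q F x \<subseteq> (\<Union>q\<in>Q F x. ball q e)"
    using \<open>e > 0\<close> by auto
  then have "\<forall>\<^sub>F n in sequentially. Qd F x (1 / real n) \<subseteq> (\<Union>q\<in>Q F x. ball q e)"
    using assms unfolding vietoris_conv_def by blast
  then show "\<forall>\<^sub>F n in sequentially. Qd F x (1 / real n) \<subseteq> ball_sum (Q F x) e"
    by (rule eventually_mono) (use \<open>e > 0\<close> in \<open>force simp: ball_sum_eq_UN_cball\<close>)
qed

lemma strongly_remotal_imp_vietoris_conv_Qd:
  assumes "compact (Q F x)" "strongly_remotal F x"
  shows "vietoris_conv (\<lambda>n. Qd F x (1 / real n)) (Q F x)"
  unfolding vietoris_conv_def
proof (intro conjI allI impI)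
  fix U assume "open U \<and> Q F x \<subseteq> U"
  then obtain e where "e > 0" "(\<Union>q\<in>Q F x. cball q e) \<subseteq> U"
    using compact_subset_open_imp_cball_epsilon_subset assms(1) by metis
  then show "\<forall>\<^sub>F n in sequentially. Qd F x (1 / real n) \<subseteq> U"
    using assms(2)[unfolded strongly_remotal_iff_eventually, rule_format, of e]
    by (auto elim!: eventually_mono simp: ball_sum_eq_UN_cball)
next
  fix U assume "open U \<and> Q F x \<inter> U \<noteq> {}"
  moreover have "Q F x \<subseteq> Qd F x (1 / real n)" for n by (simp add: Q_subset_Qd)
  ultimately show "\<forall>\<^sub>F n in sequentially. Qd F x (1 / real n) \<inter> U \<noteq> {}"
    by (intro always_eventually allI) blast
qed

lemma sup_compact_imp_compact_Q:
  assumes "bounded F" "sup_compact F x"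
  shows "compact (Q F x)"
  unfolding compact_eq_seq_compact_metric
proof (rule seq_compactI)
  fix y :: "nat \<Rightarrow> 'a" assume "\<forall>n. y n \<in> Q F x"
  then have "\<forall>n. y n \<in> F" and max: "\<And>r. (\<lambda>n. norm (x - (y \<circ> r) n)) \<longlonglongrightarrow> farthest_rad F x"
    using assms(1) by (simp_all add: mem_Q_iff)
  moreover have "(\<lambda>n. norm (x - y n)) \<longlonglongrightarrow> farthest_rad F x" using max[of id] by simp
  ultimately obtain r l where "strict_mono r" "l \<in> F" "(y \<circ> r) \<longlonglongrightarrow> l"
    using assms(2) unfolding sup_compact_def by blast
  moreover have "l \<in> Q F x"
    using limit_of_maximizing_in_Q[OF assms(1) max[of r]] calculation(2,3) by blast
  ultimately show "\<exists>l\<in>Q F x. \<exists>r. strict_mono r \<and> (y \<circ> r) \<longlonglongrightarrow> l" by blast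
qed

lemma sup_compact_imp_strongly_remotal:
  assumes "bounded F" "sup_compact F x"
  shows "strongly_remotal F x"
  unfolding strongly_remotal_def
proof (rule ccontr)
  assume "\<not> (\<forall>e>0. \<exists>d>0. Qd F x d \<subseteq> ball_sum (Q F x) e)"
  then obtain e where "e > 0" and "\<And>n. \<not> Qd F x (1 / real (Suc n)) \<subseteq> ball_sum (Q F x) e"
    by (metis of_nat_0_less_iff zero_less_Suc zero_less_divide_1_iff)
  then have "\<forall>n. \<exists>z. z \<in> Qd F x (1 / real (Suc n)) \<and> z \<notin> ball_sum (Q F x) e"
    by blast
  then obtain y where y: "\<And>n. y n \<in> Qd F x (1 / real (Suc n))" "\<And>n. y n \<notin> ball_sum (Q F x) e"
    by metis
  have "(\<lambda>n. 1 / real (Suc n)) \<longlonglongrightarrow> 0"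
    using LIMSEQ_Suc[OF lim_1_over_n] by simp
  from maximizing_if_in_Qd[OF assms(1) this y(1)]
  have max: "(\<lambda>n. norm (x - y n)) \<longlonglongrightarrow> farthest_rad F x" .
  then obtain r l where r: "strict_mono r" "l \<in> F" "(y \<circ> r) \<longlonglongrightarrow> l"
    using assms(2) y(1) Qd_subset unfolding sup_compact_def by blast
  have "(\<lambda>n. norm (x - (y \<circ> r) n)) \<longlonglongrightarrow> farthest_rad F x"
    using LIMSEQ_subseq_LIMSEQ[OF max r(1)] by (simp add: o_def)
  from limit_of_maximizing_in_Q[OF assms(1) this r(3,2)] have "l \<in> Q F x" .
  moreover obtain n where "dist ((y \<circ> r) n) l < e"
    using r(3) \<open>e > 0\<close> unfolding lim_sequentially by blast
  ultimately show False
    using y(2)[of "r n"] \<open>e > 0\<close> by (auto simp: ball_sum_eq_UN_cball dist_commute)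
qed

lemma kur_alpha_Qd_tendsto_zero:
  assumes "bounded F" "compact (Q F x)" "strongly_remotal F x"
  shows "(\<lambda>n. kur_alpha (Qd F x (1 / real n))) \<longlonglongrightarrow> 0"
proof (rule tendstoI)
  fix e :: real assume "e > 0"
  then have "e / 4 > 0" by simp
  then obtain E where E: "finite E" "Q F x \<subseteq> ball_sum E (e / 4)"
    using compact_imp_finite_ball_sum_cover[OF assms(2)] by blast
  have "ball_sum (Q F x) (e / 4) \<subseteq> ball_sum (ball_sum E (e / 4)) (e / 4)"
    using E(2) by (rule ball_sum_mono)
  also have "\<dots> \<subseteq> ball_sum E (e / 4 + e / 4)"
    using \<open>e / 4 > 0\<close> \<open>e / 4 > 0\<close> by (rule ball_sum_ball_sum_subset)
  finally have Q_cover: "ball_sum (Q F x) (e / 4) \<subseteq> ball_sum E (e / 2)" by simp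
  have "\<forall>\<^sub>F n in sequentially. Qd F x (1 / real n) \<subseteq> ball_sum (Q F x) (e / 4)"
    using assms(3) \<open>e / 4 > 0\<close> unfolding strongly_remotal_iff_eventually by blast
  then have "\<forall>\<^sub>F n in sequentially. Qd F x (1 / real n) \<subseteq> ball_sum E (e / 2)"
    by (rule eventually_mono) (use Q_cover in blast)
  then show "\<forall>\<^sub>F n in sequentially. dist (kur_alpha (Qd F x (1 / real n))) 0 < e"
  proof (rule eventually_mono)
    fix n assume cover: "Qd F x (1 / real n) \<subseteq> ball_sum E (e / 2)"
    have "0 \<le> kur_alpha (Qd F x (1 / real n))"
      using kur_alpha_nonneg bounded_subset[OF assms(1) Qd_subset] by blast
    moreover have "kur_alpha (Qd F x (1 / real n)) \<le> e / 2"
      using kur_alpha_le[OF _ E(1) cover] \<open>e > 0\<close> by simp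
    ultimately show "dist (kur_alpha (Qd F x (1 / real n))) 0 < e"
      using \<open>e > 0\<close> by simp
  qed
qed

lemma sup_compact_if_kur_alpha_Qd_tendsto_zero:
  fixes F :: "'a::banach set"
  assumes "closed F" "bounded F" "(\<lambda>n. kur_alpha (Qd F x (1 / real n))) \<longlonglongrightarrow> 0"
  shows "sup_compact F x"
  unfolding sup_compact_def
proof (intro allI impI)
  fix y :: "nat \<Rightarrow> 'a"
  assume y: "(\<forall>n. y n \<in> F) \<and> (\<lambda>n. norm (x - y n)) \<longlonglongrightarrow> farthest_rad F x"
  have "\<exists>E. finite E \<and> (\<forall>\<^sub>F m in sequentially. y m \<in> ball_sum E e)" if "e > 0" for e
  proof -
    obtain N where N: "\<And>n. n \<ge> N \<Longrightarrow> kur_alpha (Qd F x (1 / real n)) < e"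
      using order_tendstoD(2)[OF assms(3) \<open>e > 0\<close>] unfolding eventually_sequentially by blast
    have "kur_alpha (Qd F x (1 / real (Suc N))) < e" using N[of "Suc N"] by simp
    then obtain E where "finite E" and cover: "Qd F x (1 / real (Suc N)) \<subseteq> ball_sum E e"
      using finite_ball_sum_cover_if_kur_alpha_less bounded_subset[OF assms(2) Qd_subset] by blast
    have "\<forall>\<^sub>F m in sequentially. y m \<in> Qd F x (1 / real (Suc N))"
      using y by (intro eventually_in_Qd_if_maximizing) auto
    then have "\<forall>\<^sub>F m in sequentially. y m \<in> ball_sum E e"
      by (rule eventually_mono) (use cover in blast)
    then show ?thesis using \<open>finite E\<close> by blast
  qed
  then obtain r l where "strict_mono r" "(y \<circ> r) \<longlonglongrightarrow> l"
    using convergent_subseq_if_eventually_finitely_covered by blast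
  moreover have "l \<in> F"
    using closed_sequentially[OF assms(1), of "y \<circ> r"] calculation(2) y by simp
  ultimately show "\<exists>r l. strict_mono r \<and> l \<in> F \<and> (y \<circ> r) \<longlonglongrightarrow> l" by blast
qed

theorem theorem2p5:
  fixes F :: "'a::banach set" and x :: 'a
  assumes "F \<noteq> {}" and "closed F" and "bounded F" and "Q F x \<noteq> {}"
  defines "P1 \<equiv> sup_compact F x"
      and "P2 \<equiv> compact (Q F x) \<and> vietoris_conv (\<lambda>n. Qd F x (1 / real n)) (Q F x)"
      and "P3 \<equiv> compact (Q F x) \<and> hausdorff_conv (\<lambda>n. Qd F x (1 / real n)) (Q F x)"
      and "P4 \<equiv> compact (Q F x) \<and> strongly_remotal F x"
      and "P5 \<equiv> (\<lambda>n. kur_alpha (Qd F x (1 / real n))) \<longlonglongrightarrow> 0"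
  shows "(P1 \<longleftrightarrow> P2) \<and> (P1 \<longleftrightarrow> P3) \<and> (P1 \<longleftrightarrow> P4) \<and> (P1 \<longleftrightarrow> P5)"
proof -
  \<comment> \<open>the equivalences hold without the hypotheses \<open>F \<noteq> {}\<close> and \<open>Q F x \<noteq> {}\<close>\<close>
  have "P1 \<Longrightarrow> P4"
    unfolding P1_def P4_def
    using sup_compact_imp_compact_Q sup_compact_imp_strongly_remotal assms(3) by blast
  moreover have "P4 \<Longrightarrow> P5"
    unfolding P4_def P5_def using kur_alpha_Qd_tendsto_zero assms(3) by blast
  moreover have "P5 \<Longrightarrow> P1"
    unfolding P5_def P1_def using sup_compact_if_kur_alpha_Qd_tendsto_zero assms(2,3) by blast
  moreover have "P2 \<longleftrightarrow> P4"
    unfolding P2_def P4_def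
    using vietoris_conv_Qd_imp_strongly_remotal strongly_remotal_imp_vietoris_conv_Qd by blast
  moreover have "P3 \<longleftrightarrow> P4"
    unfolding P3_def P4_def using hausdorff_conv_Qd_iff_strongly_remotal by blast
  ultimately show ?thesis by blast
qed

end
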